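(* Let $\phi$ be an LTL formula. For every $\mathbf{AX}^{fin}$-atom $V_0$ of $\phi$ there is a finite chain of $\mathbf{AX}^{fin}$-atoms $V_0,\dots,V_k$ such that $\bigcirc\mathit{false}\in V_k$.
   Context: LTL formulas: grammar $\phi ::= p\mid\neg\phi\mid\phi\wedge\psi\mid\bigcirc\phi\mid\phi\,\mathcal{U}\,\psi$ over propositions $p\in\Phi_0$; $\vee,\Rightarrow$ standard abbreviations; $\mathit{true}$ a fixed tautology, $\mathit{false}:=\neg\mathit{true}$, $\Diamond\phi:=\mathit{true}\,\mathcal{U}\,\phi$, $\overline{\bigcirc}\phi:=\neg\bigcirc\neg\phi$. $\mathbf{AX}^{fin}$ consists of Prop (all propositional tautology instances), MP (from $\phi$, $\phi\Rightarrow\psi$ infer $\psi$), T1: $\bigcirc\phi\wedge\bigcirc(\phi\Rightarrow\psi)\Rightarrow\bigcirc\psi$, T2': $\phi\,\mathcal{U}\,\psi\Leftrightarrow\psi\vee(\phi\wedge\overline{\bigcirc}(\phi\,\mathcal{U}\,\psi))$, T3': $\bigcirc\phi\Leftrightarrow(\bigcirc\mathit{false}\vee\overline{\bigcirc}\phi)$, RT1 (from $\phi$ infer $\bigcirc\phi$), RT2 (from $\phi'\Rightarrow\neg\psi\wedge\bigcirc\phi'$ infer $\phi'\Rightarrow\neg(\phi\,\mathcal{U}\,\psi)$), and Fin: $\Diamond\bigcirc\mathit{false}$. A formula is consistent if its negation is not provable; a finite set is consistent if its conjunction is. Closure: $Cl'(\phi)$ is the smallest set $S$ with $\phi\in S$;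 $\mathit{true}\,\mathcal{U}\,\bigcirc\mathit{false}\in S$; $\neg\psi\in S\Rightarrow\psi\in S$; $\psi_1\wedge\psi_2\in S\Rightarrow\psi_1,\psi_2\in S$; $\bigcirc\psi\in S\Rightarrow\psi\in S$; $\bigcirc\neg\psi\in S\Rightarrow\bigcirc\psi\in S$; $\psi_1\,\mathcal{U}\,\psi_2\in S\Rightarrow\psi_1,\psi_2,\overline{\bigcirc}(\psi_1\,\mathcal{U}\,\psi_2)\in S$. $Cl(\phi)=Cl'(\phi)\cup\{\neg\psi:\psi\in Cl'(\phi)\}$. An $\mathbf{AX}^{fin}$-atom of $\phi$ is a maximal consistent subset of $Cl(\phi)$; $\widehat V$ is the conjunction of its formulas. $V\to W$ iff $\widehat V\wedge\overline{\bigcirc}\widehat W$ is consistent. A chain is a sequence $V_0,V_1,\dots$ of atoms with $V_i\to V_{i+1}$ for consecutive indices. *)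

theory Defs
  imports Main
begin

datatype 'p ltl =
    Prop 'p
  | Neg "'p ltl"
  | And "'p ltl" "'p ltl"
  | Next "'p ltl"
  | Until "'p ltl" "'p ltl"

definition Or :: "'p ltl \<Rightarrow> 'p ltl \<Rightarrow> 'p ltl" where
  "Or a b = Neg (And (Neg a) (Neg b))"

definition Imp :: "'p ltl \<Rightarrow> 'p ltl \<Rightarrow> 'p ltl" where
  "Imp a b = Or (Neg a) b"

definition Iff :: "'p ltl \<Rightarrow> 'p ltl \<Rightarrow> 'p ltl" where
  "Iff a b = And (Imp a b) (Imp b a)"

definition TT :: "'p ltl" where
  "TT = Neg (And (Prop undefined) (Neg (Prop undefined)))"

definition FF :: "'p ltl" where
  "FF = Neg TT"

definition Ev :: "'p ltl \<Rightarrow> 'p ltl" where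
  "Ev a = Until TT a"

definition WNext :: "'p ltl \<Rightarrow> 'p ltl" where
  "WNext a = Neg (Next (Neg a))"

fun peval :: "('p ltl \<Rightarrow> bool) \<Rightarrow> 'p ltl \<Rightarrow> bool" where
  "peval v (Prop p) = v (Prop p)"
| "peval v (Neg a) = (\<not> peval v a)"
| "peval v (And a b) = (peval v a \<and> peval v b)"
| "peval v (Next a) = v (Next a)"
| "peval v (Until a b) = v (Until a b)"

definition ptaut :: "'p ltl \<Rightarrow> bool" where
  "ptaut f = (\<forall>v. peval v f)"

inductive prov :: "'p ltl \<Rightarrow> bool" where
  Prop_ax: "ptaut f \<Longrightarrow> prov f"
| MP: "prov f \<Longrightarrow> prov (Imp f g) \<Longrightarrow> prov g"
| T1: "prov (Imp (And (Next f) (Next (Imp f g))) (Next g))"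
| T2': "prov (Iff (Until f g) (Or g (And f (WNext (Until f g)))))"
| T3': "prov (Iff (Next f) (Or (Next FF) (WNext f)))"
| RT1: "prov f \<Longrightarrow> prov (Next f)"
| RT2: "prov (Imp f' (And (Neg g) (Next f'))) \<Longrightarrow> prov (Imp f' (Neg (Until f g)))"
| Fin: "prov (Ev (Next FF))"

definition consistent :: "'p ltl \<Rightarrow> bool" where
  "consistent f = (\<not> prov (Neg f))"

fun conj_list :: "'p ltl list \<Rightarrow> 'p ltl" where
  "conj_list [] = TT"
| "conj_list [x] = x"
| "conj_list (x # xs) = And x (conj_list xs)"

definition hat :: "'p ltl set \<Rightarrow> 'p ltl" where
  "hat S = conj_list (SOME xs. set xs = S \<and> distinct xs)"

definition consistent_set :: "'p ltl set \<Rightarrow> bool" where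
  "consistent_set S = (finite S \<and> consistent (hat S))"

inductive_set Cl' :: "'p ltl \<Rightarrow> 'p ltl set" for \<phi> :: "'p ltl" where
  base: "\<phi> \<in> Cl' \<phi>"
| fin: "Until TT (Next FF) \<in> Cl' \<phi>"
| neg: "Neg \<psi> \<in> Cl' \<phi> \<Longrightarrow> \<psi> \<in> Cl' \<phi>"
| and1: "And \<psi>1 \<psi>2 \<in> Cl' \<phi> \<Longrightarrow> \<psi>1 \<in> Cl' \<phi>"
| and2: "And \<psi>1 \<psi>2 \<in> Cl' \<phi> \<Longrightarrow> \<psi>2 \<in> Cl' \<phi>"
| next1: "Next \<psi> \<in> Cl' \<phi> \<Longrightarrow> \<psi> \<in> Cl' \<phi>"
| nextneg: "Next (Neg \<psi>) \<in> Cl' \<phi> \<Longrightarrow> Next \<psi> \<in> Cl' \<phi>"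
| until1: "Until \<psi>1 \<psi>2 \<in> Cl' \<phi> \<Longrightarrow> \<psi>1 \<in> Cl' \<phi>"
| until2: "Until \<psi>1 \<psi>2 \<in> Cl' \<phi> \<Longrightarrow> \<psi>2 \<in> Cl' \<phi>"
| until3: "Until \<psi>1 \<psi>2 \<in> Cl' \<phi> \<Longrightarrow> WNext (Until \<psi>1 \<psi>2) \<in> Cl' \<phi>"

definition Cl :: "'p ltl \<Rightarrow> 'p ltl set" where
  "Cl \<phi> = Cl' \<phi> \<union> Neg ` Cl' \<phi>"

definition atom :: "'p ltl \<Rightarrow> 'p ltl set \<Rightarrow> bool" where
  "atom \<phi> V = (V \<subseteq> Cl \<phi> \<and> consistent_set V \<and>
     (\<forall>W. V \<subset> W \<and> W \<subseteq> Cl \<phi> \<longrightarrow> \<not> consistent_set W))"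

definition arrow :: "'p ltl set \<Rightarrow> 'p ltl set \<Rightarrow> bool" where
  "arrow V W = consistent (And (hat V) (WNext (hat W)))"

end

theory Submission
  imports Defs
begin

(* Suppose no atom reachable from V0 contains Next FF, and let P be the disjunction of the
   reachable atoms. The disjunction of all atoms is provable, and hat V implies Next (Neg (hat W))
   for every atom W with \<not> arrow V W; hence hat V implies Next of the disjunction of the
   successors of V. So P implies Neg (Next FF) and Next P, and rule RT2 gives
   P ==> Neg (Until TT (Next FF)), contradicting axiom Fin, because hat V0 implies P and is
   consistent. *)

lemma peval_Imp [simp]: "peval v (Imp a b) = (peval v a \<longrightarrow> peval v b)"
  by (simp add: Imp_def Or_def)

lemma peval_Or [simp]: "peval v (Or a b) = (peval v a \<or> peval v b)"
  by (simp add: Or_def)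

lemma peval_TT [simp]: "peval v TT"
  by (simp add: TT_def)

lemma peval_FF [simp]: "\<not> peval v FF"
  by (simp add: FF_def)

lemma peval_conj_list: "peval v (conj_list xs) = (\<forall>x\<in>set xs. peval v x)"
  by (induction xs rule: conj_list.induct) auto

lemma set_hat_list:
  assumes "finite S"
  shows "set (SOME xs. set xs = S \<and> distinct xs) = S"
  using someI_ex[OF finite_distinct_list[OF assms]] by blast

lemma peval_hat [simp]: "finite S \<Longrightarrow> peval v (hat S) = (\<forall>f\<in>S. peval v f)"
  by (simp add: hat_def peval_conj_list set_hat_list)

lemma prov_taut: "(\<And>v. peval v f) \<Longrightarrow> prov f"
  by (rule prov.Prop_ax) (simp add: ptaut_def)

lemma prov_taut_consequence:
  assumes "finite F" and "\<And>f. f \<in> F \<Longrightarrow> prov f"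
    and "\<And>v. \<forall>f\<in>F. peval v f \<Longrightarrow> peval v g"
  shows "prov g"
  using assms
proof (induction F arbitrary: g rule: finite_induct)
  case empty
  then show ?case by (simp add: prov_taut)
next
  case (insert f F)
  have "prov (Imp f g)" by (rule insert.IH) (use insert in auto)
  then show ?case using insert.prems prov.MP by blast
qed

lemma prov_by_taut1:
  "prov a \<Longrightarrow> (\<And>v. peval v a \<Longrightarrow> peval v b) \<Longrightarrow> prov b"
  by (rule prov_taut_consequence[of "{a}"]) auto

lemma prov_by_taut2:
  "prov a \<Longrightarrow> prov b \<Longrightarrow> (\<And>v. peval v a \<Longrightarrow> peval v b \<Longrightarrow> peval v c) \<Longrightarrow> prov c"
  by (rule prov_taut_consequence[of "{a, b}"]) auto

lemma prov_by_taut3: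
  "prov a \<Longrightarrow> prov b \<Longrightarrow> prov c \<Longrightarrow>
    (\<And>v. peval v a \<Longrightarrow> peval v b \<Longrightarrow> peval v c \<Longrightarrow> peval v d) \<Longrightarrow> prov d"
  by (rule prov_taut_consequence[of "{a, b, c}"]) auto

lemma consistent_mono:
  assumes "consistent a" and "\<And>v. peval v a \<Longrightarrow> peval v b"
  shows "consistent b"
  using assms prov_by_taut1[of "Neg b" "Neg a"] by (auto simp: consistent_def)

lemma Next_mono:
  assumes "prov (Imp a b)"
  shows "prov (Imp (Next a) (Next b))"
  using prov.RT1[OF assms] prov.T1[of a b] by (rule prov_by_taut2) auto

lemma Next_And: "prov (Imp (And (Next a) (Next b)) (Next (And a b)))"
proof -
  have "prov (Next (Imp a (Imp b (And a b))))"
    by (intro prov.RT1 prov_taut) auto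
  with prov.T1[of a "Imp b (And a b)"] prov.T1[of b "And a b"] show ?thesis
    by (rule prov_by_taut3) auto
qed

lemma prov_Imp_Next_conj_list:
  "\<forall>w\<in>set ws. prov (Imp a (Next w)) \<Longrightarrow> prov (Imp a (Next (conj_list ws)))"
proof (induction ws rule: conj_list.induct)
  case 1
  have "prov (Next TT)" by (intro prov.RT1 prov_taut) auto
  then show ?case by (rule prov_by_taut1) auto
next
  case (2 w)
  then show ?case by simp
next
  case (3 w w' ws)
  then have "prov (Imp a (Next w))" "prov (Imp a (Next (conj_list (w' # ws))))" by auto
  with Next_And[of w "conj_list (w' # ws)"] show ?case
    by (rule prov_by_taut3) auto
qed

lemma prov_Imp_Next_hat:
  "finite S \<Longrightarrow> \<forall>w\<in>S. prov (Imp a (Next w)) \<Longrightarrow> prov (Imp a (Next (hat S)))"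
  unfolding hat_def by (intro prov_Imp_Next_conj_list) (simp add: set_hat_list)

fun subformulas :: "'p ltl \<Rightarrow> 'p ltl set" where
  "subformulas (Prop p) = {Prop p}"
| "subformulas (Neg a) = insert (Neg a) (subformulas a)"
| "subformulas (And a b) = insert (And a b) (subformulas a \<union> subformulas b)"
| "subformulas (Next a) = insert (Next a) (subformulas a)"
| "subformulas (Until a b) = insert (Until a b) (subformulas a \<union> subformulas b)"

lemma finite_subformulas: "finite (subformulas a)"
  by (induction a) auto

lemma subformulas_refl [simp]: "a \<in> subformulas a"
  by (cases a) auto

lemma subformulas_trans: "x \<in> subformulas a \<Longrightarrow> subformulas x \<subseteq> subformulas a"
  by (induction a) auto

lemma Cl'_subset:
  assumes "\<phi> \<in> B" "Until TT (Next FF) \<in> B" "\<And>x. x \<in> B \<Longrightarrow> subformulas x \<subseteq> B"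
  shows "Cl' \<phi> \<subseteq> B \<union> Neg ` B \<union> Next ` (B \<union> Neg ` B) \<union> Neg ` Next ` (B \<union> Neg ` B)"
proof
  have closed: "Neg x \<in> B \<Longrightarrow> x \<in> B" "Next x \<in> B \<Longrightarrow> x \<in> B" "Next (Neg x) \<in> B \<Longrightarrow> x \<in> B"
    "And x y \<in> B \<Longrightarrow> x \<in> B \<and> y \<in> B" "Until x y \<in> B \<Longrightarrow> x \<in> B \<and> y \<in> B" for x y
    using assms(3) by fastforce+
  fix x assume "x \<in> Cl' \<phi>"
  then show "x \<in> B \<union> Neg ` B \<union> Next ` (B \<union> Neg ` B) \<union> Neg ` Next ` (B \<union> Neg ` B)"
    by induction (use assms(1,2) in \<open>auto simp: WNext_def dest: closed\<close>)
qed

lemma finite_Cl': "finite (Cl' \<phi>)"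
proof -
  let ?B = "subformulas \<phi> \<union> subformulas (Until TT (Next FF))"
  have "Cl' \<phi> \<subseteq> ?B \<union> Neg ` ?B \<union> Next ` (?B \<union> Neg ` ?B) \<union> Neg ` Next ` (?B \<union> Neg ` ?B)"
    by (rule Cl'_subset) (auto dest: subformulas_trans)
  then show ?thesis by (rule finite_subset) (simp add: finite_subformulas)
qed

lemma finite_Cl: "finite (Cl \<phi>)"
  by (simp add: Cl_def finite_Cl')

lemma Next_FF_in_Cl': "Next FF \<in> Cl' \<phi>"
  using Cl'.fin Cl'.until2 by blast

lemma not_consistent_hat_if_contradictory:
  assumes "finite W" "y \<in> W" "Neg y \<in> W"
  shows "\<not> consistent (hat W)"
proof -
  have "\<not> peval v (hat W)" for v
    using assms by (simp; metis peval.simps(2))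
  then have "prov (Neg (hat W))" by (intro prov_taut) simp
  then show ?thesis by (simp add: consistent_def)
qed

lemma consistent_extension:
  assumes "consistent \<psi>"
  shows "\<exists>S. S \<subseteq> set cs \<union> Neg ` set cs \<and> (\<forall>c\<in>set cs. c \<in> S \<or> Neg c \<in> S)
    \<and> consistent (And \<psi> (hat S))"
proof (induction cs)
  case Nil
  have "consistent (And \<psi> (hat {}))" using assms by (rule consistent_mono) simp
  then show ?case by (intro exI[of _ "{}"]) simp
next
  case (Cons c cs)
  then obtain S where S: "S \<subseteq> set cs \<union> Neg ` set cs" "\<forall>c\<in>set cs. c \<in> S \<or> Neg c \<in> S"
    "consistent (And \<psi> (hat S))" by blast
  have "finite S" using S(1) by (rule finite_subset) simp
  have "consistent (And \<psi> (hat (insert c S))) \<or> consistent (And \<psi> (hat (insert (Neg c) S)))"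
  proof (rule ccontr)
    assume "\<not> ?thesis"
    then have "prov (Neg (And \<psi> (hat (insert c S))))" "prov (Neg (And \<psi> (hat (insert (Neg c) S))))"
      by (simp_all add: consistent_def)
    then have "prov (Neg (And \<psi> (hat S)))" by (rule prov_by_taut2) (use \<open>finite S\<close> in auto)
    then show False using S(3) by (simp add: consistent_def)
  qed
  then show ?case
  proof
    assume "consistent (And \<psi> (hat (insert c S)))"
    then show ?case using S(1,2) by (intro exI[of _ "insert c S"]) auto
  next
    assume "consistent (And \<psi> (hat (insert (Neg c) S)))"
    then show ?case using S(1,2) by (intro exI[of _ "insert (Neg c) S"]) auto
  qed
qed

lemma atom_finite: "atom \<phi> W \<Longrightarrow> finite W"
  by (simp add: atom_def consistent_set_def)

lemma atom_consistent: "atom \<phi> W \<Longrightarrow> consistent (hat W)"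
  by (simp add: atom_def consistent_set_def)

lemma atomI:
  assumes "S \<subseteq> Cl \<phi>" "consistent (hat S)" "\<forall>c\<in>Cl' \<phi>. c \<in> S \<or> Neg c \<in> S"
  shows "atom \<phi> S"
proof -
  have "finite S" using assms(1) finite_Cl by (rule finite_subset)
  moreover have "\<not> consistent_set W" if W: "S \<subset> W" "W \<subseteq> Cl \<phi>" for W
  proof
    assume "consistent_set W"
    then have "finite W" "consistent (hat W)" by (simp_all add: consistent_set_def)
    obtain x where x: "x \<in> W" "x \<notin> S" using W(1) by blast
    obtain y where "y \<in> W" "Neg y \<in> W"
    proof (cases "x \<in> Cl' \<phi>")
      case True
      then show thesis using that x W assms(3) by blast
    next
      case False
      then obtain c where "x = Neg c" "c \<in> Cl' \<phi>" using x W by (auto simp: Cl_def)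
      then show thesis using that x W assms(3) by blast
    qed
    then show False
      using not_consistent_hat_if_contradictory \<open>finite W\<close> \<open>consistent (hat W)\<close> by blast
  qed
  ultimately show ?thesis using assms(1,2) by (simp add: atom_def consistent_set_def)
qed

lemma atom_complete:
  assumes "atom \<phi> W" "c \<in> Cl' \<phi>"
  shows "c \<in> W \<or> Neg c \<in> W"
proof (rule ccontr)
  assume "\<not> ?thesis"
  then have "W \<subset> insert c W" "W \<subset> insert (Neg c) W" by auto
  moreover have "insert c W \<subseteq> Cl \<phi>" "insert (Neg c) W \<subseteq> Cl \<phi>"
    using assms by (auto simp: atom_def Cl_def)
  ultimately have "\<not> consistent_set (insert c W)" "\<not> consistent_set (insert (Neg c) W)"
    using assms(1) unfolding atom_def by blast+
  then have "prov (Neg (hat (insert c W)))" "prov (Neg (hat (insert (Neg c) W)))"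
    using atom_finite[OF assms(1)] by (simp_all add: consistent_set_def consistent_def)
  then have "prov (Neg (hat W))" by (rule prov_by_taut2) (use atom_finite[OF assms(1)] in auto)
  then show False using atom_consistent[OF assms(1)] by (simp add: consistent_def)
qed

lemma finite_atoms: "finite {W. atom \<phi> W}"
proof (rule finite_subset)
  show "{W. atom \<phi> W} \<subseteq> Pow (Cl \<phi>)" by (auto simp: atom_def)
qed (simp add: finite_Cl)

lemma atom_consistent_with:
  assumes "consistent \<psi>"
  obtains W where "atom \<phi> W" "consistent (And \<psi> (hat W))"
proof -
  obtain cs where "set cs = Cl' \<phi>" using finite_Cl' finite_list by blast
  with consistent_extension[OF assms, of cs] obtain S where S: "S \<subseteq> Cl \<phi>"
    "\<forall>c\<in>Cl' \<phi>. c \<in> S \<or> Neg c \<in> S" "consistent (And \<psi> (hat S))"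
    by (auto simp: Cl_def)
  have "finite S" using S(1) finite_Cl by (rule finite_subset)
  have "consistent (hat S)" using S(3) by (rule consistent_mono) (use \<open>finite S\<close> in auto)
  with S show thesis by (blast intro: that atomI)
qed

definition Disj :: "'p ltl set \<Rightarrow> 'p ltl" where
  "Disj S = Neg (hat (Neg ` S))"

lemma peval_Disj [simp]: "finite S \<Longrightarrow> peval v (Disj S) = (\<exists>f\<in>S. peval v f)"
  by (simp add: Disj_def)

lemma prov_Disj_atoms: "prov (Disj (hat ` {W. atom \<phi> W}))"
proof (rule ccontr)
  let ?D = "Disj (hat ` {W. atom \<phi> W})"
  assume "\<not> prov ?D"
  then have "consistent (Neg ?D)"
    unfolding consistent_def using prov_by_taut1[of "Neg (Neg ?D)" ?D] by auto
  then obtain W where W: "atom \<phi> W" "consistent (And (Neg ?D) (hat W))"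
    by (rule atom_consistent_with)
  have "prov (Neg (And (Neg ?D) (hat W)))"
    using W(1) atom_finite[OF W(1)] finite_atoms[of \<phi>] by (intro prov_taut) auto
  then show False using W(2) by (simp add: consistent_def)
qed

lemma prov_Imp_Next_Disj_successors:
  "prov (Imp (hat V) (Next (Disj (hat ` {W. atom \<phi> W \<and> arrow V W}))))"
proof -
  let ?N = "(\<lambda>W. Neg (hat W)) ` {W. atom \<phi> W \<and> \<not> arrow V W}"
  let ?succ = "Disj (hat ` {W. atom \<phi> W \<and> arrow V W})"
  have "finite ?N"
    by (rule finite_imageI, rule finite_subset[OF _ finite_atoms[of \<phi>]]) auto
  moreover have "prov (Imp (hat V) (Next n))" if "n \<in> ?N" for n
  proof -
    obtain W where "\<not> arrow V W" "n = Neg (hat W)" using \<open>n \<in> ?N\<close> by blast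
    then show ?thesis
      using prov_by_taut1[of "Neg (And (hat V) (WNext (hat W)))"]
      by (auto simp: arrow_def consistent_def WNext_def)
  qed
  ultimately have Next_N: "prov (Imp (hat V) (Next (hat ?N)))" by (intro prov_Imp_Next_hat) auto
  have "prov (Imp (hat ?N) ?succ)"
    using prov_Disj_atoms[of \<phi>]
  proof (rule prov_by_taut1)
    fix v assume "peval v (Disj (hat ` {W. atom \<phi> W}))"
    then show "peval v (Imp (hat ?N) ?succ)"
      using \<open>finite ?N\<close> finite_atoms[of \<phi>] by (auto 0 4)
  qed
  with Next_N show ?thesis by (rule prov_by_taut2[OF _ Next_mono]) auto
qed

lemma successor_closed_atoms_contain_Next_FF:
  assumes "V0 \<in> R" and atoms: "\<And>V. V \<in> R \<Longrightarrow> atom \<phi> V"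
    and closed: "\<And>V W. V \<in> R \<Longrightarrow> atom \<phi> W \<Longrightarrow> arrow V W \<Longrightarrow> W \<in> R"
  shows "\<exists>V\<in>R. Next FF \<in> V"
proof (rule ccontr)
  assume no_Next_FF: "\<not> ?thesis"
  have "finite R" using finite_atoms[of \<phi>] by (rule finite_subset[rotated]) (auto dest: atoms)
  let ?P = "Disj (hat ` R)"
  have step: "prov (Imp (hat V) (And (Neg (Next FF)) (Next ?P)))" if "V \<in> R" for V
  proof -
    let ?succ = "Disj (hat ` {W. atom \<phi> W \<and> arrow V W})"
    have "atom \<phi> V" using that by (rule atoms)
    then have "finite V" "Neg (Next FF) \<in> V"
      using atom_finite atom_complete[OF _ Next_FF_in_Cl'] no_Next_FF that by blast+
    have "finite {W. atom \<phi> W \<and> arrow V W}" using finite_atoms[of \<phi>] by (rule finite_subset[rotated]) blast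
    then have "prov (Imp ?succ ?P)"
      using \<open>finite R\<close> closed[OF that] by (intro prov_taut) auto
    with prov_Imp_Next_Disj_successors[of V \<phi>] show ?thesis
      by (rule prov_by_taut2[OF _ Next_mono]) (use \<open>finite V\<close> \<open>Neg (Next FF) \<in> V\<close> in auto)
  qed
  have "prov (Imp ?P (And (Neg (Next FF)) (Next ?P)))"
    by (rule prov_taut_consequence[of "(\<lambda>V. Imp (hat V) (And (Neg (Next FF)) (Next ?P))) ` R"])
      (use step \<open>finite R\<close> atoms atom_finite in auto)
  then have "prov (Imp ?P (Neg (Until TT (Next FF))))" by (rule prov.RT2)
  with prov.Fin have "prov (Neg (hat V0))"
    by (rule prov_by_taut2) (use \<open>V0 \<in> R\<close> \<open>finite R\<close> in \<open>auto simp: Ev_def\<close>)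
  then show False using atom_consistent[OF atoms[OF \<open>V0 \<in> R\<close>]] by (simp add: consistent_def)
qed

theorem lemma1:
  fixes \<phi> :: "'p ltl" and V0 :: "'p ltl set"
  assumes "atom \<phi> V0"
  shows "\<exists>(k::nat) (V :: nat \<Rightarrow> 'p ltl set). V 0 = V0 \<and> (\<forall>i\<le>k. atom \<phi> (V i))
           \<and> (\<forall>i<k. arrow (V i) (V (Suc i))) \<and> Next FF \<in> V k"
proof -
  define succ where "succ V W \<longleftrightarrow> atom \<phi> W \<and> arrow V W" for V W
  have reachable_atom: "atom \<phi> W" if "succ\<^sup>*\<^sup>* V0 W" for W
    using that by (induction rule: rtranclp_induct) (use assms in \<open>auto simp: succ_def\<close>)
  have "\<exists>W\<in>{W. succ\<^sup>*\<^sup>* V0 W}. Next FF \<in> W"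
    by (rule successor_closed_atoms_contain_Next_FF[where \<phi> = \<phi>])
      (auto intro: reachable_atom rtranclp.rtrancl_into_rtrancl simp: succ_def)
  then obtain W where "succ\<^sup>*\<^sup>* V0 W" "Next FF \<in> W" by blast
  then obtain k V where V: "V 0 = V0" "V k = W" "\<forall>i<k. succ (V i) (V (Suc i))"
    by (auto dest!: rtranclp_imp_relpowp simp: relpowp_fun_conv)
  have "atom \<phi> (V i)" if "i \<le> k" for i
  proof (cases i)
    case (Suc j)
    then show ?thesis using V(3) that by (auto simp: succ_def)
  qed (use V(1) assms in simp)
  then show ?thesis using V \<open>Next FF \<in> W\<close> by (auto simp: succ_def)
qed

end
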